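(* Let $N\ge 1$, let $\mathcal{S}_{>0}=\{\lambda\in\mathbb{R}^N:\lambda_i>0,\ \sum_{i=1}^N\lambda_i=1\}$ be equipped with the Fisher--Rao metric $g_{ij}(\lambda)=\delta_{ij}/(4\lambda_i)$, and let $\beta_1,\ldots,\beta_N>0$ be the singular values of an operator $B$. Define the aligned transport map $\Phi_B:\mathcal{S}_{>0}\to\mathcal{S}_{>0}$ by \[ \Phi_B(\lambda)_i=\frac{\beta_i^2\lambda_i}{\sum_{j=1}^N\beta_j^2\lambda_j}. \] Then $\Phi_B$ is an isometry of $(\mathcal{S}_{>0},g)$ if and only if $\beta_1=\beta_2=\cdots=\beta_N$.
   Context: $\Phi_B$ is the map on spectral states induced by composing with $B$ under SVD alignment (the right singular vectors of $B$ coincide with the left singular vectors of the preceding operator $A$): if $\lambda=\lambda(A)$ is the normalised squared-singular-value vector of $A$, then $\Phi_B(\lambda)=\lambda(BA)$. The Fisher--Rao distance induced by $g$ is $d(\lambda,\mu)=2\arccos\big(\sum_i\sqrt{\lambda_i\mu_i}\big)$. *)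

theory Defs
  imports "HOL-Analysis.Analysis"
begin

text \<open>Open probability simplex in R^N, N = CARD('n) (at least 1 automatically).\<close>
definition simplex_pos :: "(real ^ 'n) set" where
  "simplex_pos = {lam. (\<forall>i. lam $ i > 0) \<and> (\<Sum>i\<in>UNIV. lam $ i) = 1}"

text \<open>Fisher--Rao distance induced by g_ij = delta_ij / (4 lambda_i).\<close>
definition fisher_rao_dist :: "real ^ 'n \<Rightarrow> real ^ 'n \<Rightarrow> real" where
  "fisher_rao_dist lam mu = 2 * arccos (\<Sum>i\<in>UNIV. sqrt (lam $ i * mu $ i))"

definition aligned_transport :: "real ^ 'n \<Rightarrow> real ^ 'n \<Rightarrow> real ^ 'n" where
  "aligned_transport beta lam =
     (\<chi> i. (beta $ i)\<^sup>2 * lam $ i / (\<Sum>j\<in>UNIV. (beta $ j)\<^sup>2 * lam $ j))"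

definition fr_isometry :: "(real ^ 'n \<Rightarrow> real ^ 'n) \<Rightarrow> bool" where
  "fr_isometry F \<longleftrightarrow> bij_betw F simplex_pos simplex_pos \<and>
     (\<forall>lam\<in>simplex_pos. \<forall>mu\<in>simplex_pos.
        fisher_rao_dist (F lam) (F mu) = fisher_rao_dist lam mu)"

end

theory Submission
  imports Defs
begin

text \<open>Under \<open>\<lambda> \<mapsto> \<surd>\<lambda>\<close> the open simplex becomes the positive part of the unit sphere, the
  Fisher--Rao distance twice the spherical angle, and \<open>\<Phi>\<^sub>B\<close> the map \<open>x \<mapsto> \<beta>x / |\<beta>x|\<close>
  (componentwise product), so an isometry preserves angles between the vectors \<open>\<beta>x\<close>.
  For \<open>x \<noteq> y\<close> on the sphere, \<open>x + y\<close> bisects the angle between \<open>x\<close> and \<open>y\<close> and is itself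
  (up to scaling) a point of the sphere; since \<open>\<beta>(x + y) = \<beta>x + \<beta>y\<close>, angle preservation
  makes \<open>\<beta>x + \<beta>y\<close> bisect the angle between \<open>\<beta>x\<close> and \<open>\<beta>y\<close>, which happens only in a rhombus,
  i.e. when \<open>|\<beta>x| = |\<beta>y|\<close>. Thus \<open>\<Sum>\<^sub>i \<beta>\<^sub>i\<^sup>2 \<lambda>\<^sub>i = |\<beta>\<surd>\<lambda>|\<^sup>2\<close> is constant on the simplex, which forces
  all \<open>\<beta>\<^sub>i\<^sup>2\<close> to agree. Conversely, a constant \<open>\<beta>\<close> makes \<open>\<Phi>\<^sub>B\<close> the identity.\<close>

definition cos_angle :: "'a::real_inner \<Rightarrow> 'a \<Rightarrow> real" where
  "cos_angle a b = inner a b / (norm a * norm b)"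

lemma abs_cos_angle_le_1: "\<bar>cos_angle a b\<bar> \<le> 1"
  unfolding cos_angle_def abs_divide
  by (metis Cauchy_Schwarz_ineq2 abs_mult abs_norm_cancel divide_le_eq_1 zero_less_abs_iff)

lemma cos_angle_scaleR_left: "c > 0 \<Longrightarrow> cos_angle (c *\<^sub>R a) b = cos_angle a b"
  by (simp add: cos_angle_def)

lemma cos_angle_scaleR_right: "c > 0 \<Longrightarrow> cos_angle a (c *\<^sub>R b) = cos_angle a b"
  by (simp add: cos_angle_def)

lemma cos_angle_lt_1_if_unit_neq:
  assumes "norm x = 1" "norm y = 1" "x \<noteq> y"
  shows "cos_angle x y < 1"
proof -
  have "inner x x = 1" "inner y y = 1"
    using assms(1,2) by (metis one_power2 power2_norm_eq_inner)+
  then have "(norm (x - y))\<^sup>2 = 2 - 2 * inner x y"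
    by (simp add: power2_norm_eq_inner inner_diff_left inner_diff_right inner_commute)
  moreover have "(norm (x - y))\<^sup>2 > 0" using assms(3) by simp
  ultimately show ?thesis using assms(1,2) by (simp add: cos_angle_def)
qed

lemma cos_angle_unit_sum_eq:
  assumes "norm x = 1" "norm y = 1"
  shows "cos_angle x (x + y) = cos_angle y (x + y)"
  using assms
  by (simp add: cos_angle_def inner_add_right inner_commute power2_norm_eq_inner[symmetric])

lemma norm_eq_if_cos_angle_sum_eq:
  fixes a b :: "'a::real_inner"
  assumes "a \<noteq> 0" "b \<noteq> 0" "a + b \<noteq> 0"
    and bisect: "cos_angle a (a + b) = cos_angle b (a + b)"
    and not_parallel: "cos_angle a b < 1"
  shows "norm a = norm b"
proof -
  have "inner a (a + b) / norm a = inner b (a + b) / norm b"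
    using bisect assms by (simp add: cos_angle_def field_simps)
  then have "norm a + inner a b / norm a = norm b + inner a b / norm b"
    using assms(1,2)
    by (simp add: inner_add_right inner_commute power2_norm_eq_inner[symmetric]
        add_divide_distrib power2_eq_square)
  then have "(norm a - norm b) * (1 - cos_angle a b) = 0"
    using assms(1,2) by (simp add: cos_angle_def field_simps)
  then show ?thesis using not_parallel by simp
qed

lemma nonzero_if_components_pos: "\<forall>i. z $ i > (0::real) \<Longrightarrow> z \<noteq> 0"
  by (metis zero_index less_irrefl)

definition vsqrt :: "real ^ 'n \<Rightarrow> real ^ 'n" where
  "vsqrt lam = (\<chi> i. sqrt (lam $ i))"

lemma inner_vsqrt: "inner (vsqrt lam) (vsqrt mu) = (\<Sum>i\<in>UNIV. sqrt (lam $ i * mu $ i))"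
  by (simp add: vsqrt_def inner_vec_def real_sqrt_mult)

lemma norm_vsqrt:
  assumes "lam \<in> simplex_pos"
  shows "norm (vsqrt lam) = 1"
proof -
  have "inner (vsqrt lam) (vsqrt lam) = (\<Sum>i\<in>UNIV. lam $ i)"
    using assms by (simp add: inner_vsqrt simplex_pos_def less_imp_le)
  then show ?thesis using assms by (simp add: norm_eq_sqrt_inner simplex_pos_def)
qed

lemma vsqrt_inj_on_simplex_pos:
  assumes "lam \<in> simplex_pos" "mu \<in> simplex_pos" "vsqrt lam = vsqrt mu"
  shows "lam = mu"
  using assms by (simp add: vsqrt_def simplex_pos_def vec_eq_iff less_imp_le)

lemma fisher_rao_dist_eq_cos_angle:
  assumes "lam \<in> simplex_pos" "mu \<in> simplex_pos"
  shows "fisher_rao_dist lam mu = 2 * arccos (cos_angle (vsqrt lam) (vsqrt mu))"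
  using assms by (simp add: fisher_rao_dist_def cos_angle_def norm_vsqrt inner_vsqrt)

lemma simplex_pos_normalize:
  fixes z :: "real ^ 'n"
  assumes pos: "\<forall>i. z $ i > 0"
  obtains m where "m \<in> simplex_pos" "vsqrt m = z /\<^sub>R norm z"
proof
  let ?m = "\<chi> i. (z $ i / norm z)\<^sup>2"
  have "z \<noteq> 0" using pos by (rule nonzero_if_components_pos)
  moreover have "(\<Sum>i\<in>UNIV. (z $ i)\<^sup>2) = (norm z)\<^sup>2"
    unfolding power2_norm_eq_inner inner_vec_def by (simp add: power2_eq_square)
  ultimately have "(\<Sum>i\<in>UNIV. ?m $ i) = 1"
    by (simp add: power_divide sum_divide_distrib[symmetric])
  then show "?m \<in> simplex_pos"
    using pos \<open>z \<noteq> 0\<close> by (simp add: simplex_pos_def less_imp_neq[symmetric])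
  show "vsqrt ?m = z /\<^sub>R norm z"
    using pos by (simp add: vsqrt_def vec_eq_iff divide_inverse_commute less_imp_le)
qed

lemma fr_isometry_cos_angle_vsqrt:
  assumes iso: "fr_isometry F" and "lam \<in> simplex_pos" "mu \<in> simplex_pos"
  shows "cos_angle (vsqrt (F lam)) (vsqrt (F mu)) = cos_angle (vsqrt lam) (vsqrt mu)"
proof -
  have "F lam \<in> simplex_pos" "F mu \<in> simplex_pos"
    using iso assms(2,3) by (auto simp: fr_isometry_def dest: bij_betwE)
  moreover have "fisher_rao_dist (F lam) (F mu) = fisher_rao_dist lam mu"
    using iso assms(2,3) by (simp add: fr_isometry_def)
  ultimately have "arccos (cos_angle (vsqrt (F lam)) (vsqrt (F mu)))
      = arccos (cos_angle (vsqrt lam) (vsqrt mu))"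
    using assms(2,3) by (simp add: fisher_rao_dist_eq_cos_angle)
  then show ?thesis using abs_cos_angle_le_1 arccos_eq_iff by blast
qed

lemma norm_mult_vsqrt_squared:
  assumes "\<forall>i. lam $ i \<ge> 0"
  shows "(norm (beta * vsqrt lam))\<^sup>2 = (\<Sum>i\<in>UNIV. (beta $ i)\<^sup>2 * lam $ i)"
  unfolding power2_norm_eq_inner inner_vec_def
  using assms by (simp add: vsqrt_def power2_eq_square[symmetric] power_mult_distrib)

lemma mult_vsqrt_pos:
  assumes "\<forall>i. beta $ i > 0" "lam \<in> simplex_pos"
  shows "\<forall>i. (beta * vsqrt lam) $ i > 0"
  using assms by (simp add: vsqrt_def simplex_pos_def)

lemma vsqrt_aligned_transport:
  assumes beta: "\<forall>i. beta $ i > 0" and lam: "lam \<in> simplex_pos"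
  shows "vsqrt (aligned_transport beta lam) = (beta * vsqrt lam) /\<^sub>R norm (beta * vsqrt lam)"
proof -
  let ?n = "norm (beta * vsqrt lam)"
  have sum_eq: "(\<Sum>j\<in>UNIV. (beta $ j)\<^sup>2 * lam $ j) = ?n\<^sup>2"
    using lam by (simp add: norm_mult_vsqrt_squared simplex_pos_def less_imp_le)
  have "?n > 0"
    using nonzero_if_components_pos[OF mult_vsqrt_pos[OF beta lam]] by simp
  then have "sqrt ((beta $ i)\<^sup>2 * lam $ i / ?n\<^sup>2) = beta $ i * sqrt (lam $ i) / ?n" for i
    using beta by (simp add: real_sqrt_divide real_sqrt_mult less_imp_le)
  then show ?thesis
    by (simp add: aligned_transport_def vsqrt_def sum_eq vec_eq_iff divide_inverse_commute)
qed

lemma cos_angle_vsqrt_aligned_transport: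
  assumes beta: "\<forall>i. beta $ i > 0" and "lam \<in> simplex_pos" "mu \<in> simplex_pos"
  shows "cos_angle (vsqrt (aligned_transport beta lam)) (vsqrt (aligned_transport beta mu))
       = cos_angle (beta * vsqrt lam) (beta * vsqrt mu)"
proof -
  have "beta * vsqrt lam \<noteq> 0" "beta * vsqrt mu \<noteq> 0"
    using nonzero_if_components_pos mult_vsqrt_pos[OF beta] assms(2,3) by blast+
  then show ?thesis
    using assms by (simp add: vsqrt_aligned_transport cos_angle_scaleR_left cos_angle_scaleR_right)
qed

lemma norm_mult_vsqrt_eq_if_cos_angle_preserved:
  assumes beta: "\<forall>i. beta $ i > 0"
    and preserved: "\<And>lam mu. lam \<in> simplex_pos \<Longrightarrow> mu \<in> simplex_pos \<Longrightarrow>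
       cos_angle (beta * vsqrt lam) (beta * vsqrt mu) = cos_angle (vsqrt lam) (vsqrt mu)"
    and lam: "lam \<in> simplex_pos" and mu: "mu \<in> simplex_pos"
  shows "norm (beta * vsqrt lam) = norm (beta * vsqrt mu)"
proof (cases "lam = mu")
  case False
  define x where "x = vsqrt lam"
  define y where "y = vsqrt mu"
  have unit: "norm x = 1" "norm y = 1" using lam mu by (simp_all add: x_def y_def norm_vsqrt)
  have "x \<noteq> y" using False lam mu vsqrt_inj_on_simplex_pos by (auto simp: x_def y_def)
  have pos: "\<forall>i. (beta * x) $ i > 0" "\<forall>i. (beta * y) $ i > 0"
    using mult_vsqrt_pos[OF beta] lam mu by (simp_all add: x_def y_def)
  have "\<forall>i. (x + y) $ i > 0"
    using lam mu by (simp add: x_def y_def vsqrt_def simplex_pos_def add_pos_pos)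
  then obtain m where m: "m \<in> simplex_pos" and vsqrt_m: "vsqrt m = (x + y) /\<^sub>R norm (x + y)"
    by (rule simplex_pos_normalize)
  have "x + y \<noteq> 0" using \<open>\<forall>i. (x + y) $ i > 0\<close> by (rule nonzero_if_components_pos)
  then have scale: "inverse (norm (x + y)) > 0" by simp
  have mult_vsqrt_m: "beta * vsqrt m = inverse (norm (x + y)) *\<^sub>R (beta * (x + y))"
    by (simp add: vsqrt_m vec_eq_iff algebra_simps)
  have bisect: "cos_angle (beta * z) (beta * (x + y)) = cos_angle z (x + y)"
    if "z = x \<or> z = y" for z
  proof -
    have "z = vsqrt lam \<or> z = vsqrt mu" using that by (auto simp: x_def y_def)
    then have "cos_angle (beta * z) (beta * vsqrt m) = cos_angle z (vsqrt m)"
      using preserved lam mu m by blast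
    then show ?thesis
      using scale by (simp add: mult_vsqrt_m vsqrt_m cos_angle_scaleR_right)
  qed
  have "\<forall>i. (beta * x + beta * y) $ i > 0" using pos by (simp add: add_pos_pos)
  with pos have nonzero: "beta * x \<noteq> 0" "beta * y \<noteq> 0" "beta * x + beta * y \<noteq> 0"
    by (simp_all add: nonzero_if_components_pos)
  have not_parallel: "cos_angle (beta * x) (beta * y) < 1"
    using preserved[OF lam mu] cos_angle_lt_1_if_unit_neq[OF unit \<open>x \<noteq> y\<close>]
    by (simp add: x_def y_def)
  have "beta * (x + y) = beta * x + beta * y" by (simp add: vec_eq_iff distrib_left)
  then have "cos_angle (beta * x) (beta * x + beta * y)
      = cos_angle (beta * y) (beta * x + beta * y)"
    using bisect[of x] bisect[of y] cos_angle_unit_sum_eq[OF unit] by simp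
  from norm_eq_if_cos_angle_sum_eq[OF nonzero this not_parallel] show ?thesis
    by (simp add: x_def y_def)
qed simp

lemma weight_eq_if_weighted_sum_const_on_simplex_pos:
  fixes w :: "'n::finite \<Rightarrow> real"
  assumes const: "\<And>lam mu. lam \<in> simplex_pos \<Longrightarrow> mu \<in> simplex_pos \<Longrightarrow>
       (\<Sum>k\<in>UNIV. w k * lam $ k) = (\<Sum>k\<in>UNIV. w k * mu $ k)"
  shows "w i = w j"
proof (cases "i = j")
  case False
  define N where "N = real CARD('n)"
  define eps where "eps = 1 / (2 * N)"
  have "N > 0" by (simp add: N_def)
  then have eps: "0 < eps" "eps < 1 / N" by (simp_all add: eps_def field_simps)
  define u :: "real ^ 'n" where "u = (\<chi> k. 1 / N)"
  define v :: "real ^ 'n" where "v = u + axis i eps - axis j eps"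
  have u: "u \<in> simplex_pos"
    using \<open>N > 0\<close> by (simp add: u_def simplex_pos_def N_def)
  have v: "v \<in> simplex_pos"
    using eps False \<open>N > 0\<close>
    by (auto simp: v_def u_def simplex_pos_def sum.distrib sum_subtractf axis_def N_def)
  have "w k * v $ k
      = w k * u $ k + (if k = i then w k * eps else 0) - (if k = j then w k * eps else 0)" for k
    by (simp add: v_def axis_def algebra_simps)
  then have "(\<Sum>k\<in>UNIV. w k * v $ k) = (\<Sum>k\<in>UNIV. w k * u $ k) + w i * eps - w j * eps"
    by (simp add: sum.distrib sum_subtractf)
  with const[OF u v] have "w i * eps = w j * eps" by simp
  then show ?thesis using eps by simp
qed simp

lemma weighted_sum_const_if_fr_isometry_aligned_transport:
  assumes beta: "\<forall>i. beta $ i > 0" and iso: "fr_isometry (aligned_transport beta)"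
    and lam: "lam \<in> simplex_pos" and mu: "mu \<in> simplex_pos"
  shows "(\<Sum>k\<in>UNIV. (beta $ k)\<^sup>2 * lam $ k) = (\<Sum>k\<in>UNIV. (beta $ k)\<^sup>2 * mu $ k)"
proof -
  have preserved:
    "cos_angle (beta * vsqrt lam) (beta * vsqrt mu) = cos_angle (vsqrt lam) (vsqrt mu)"
    if "lam \<in> simplex_pos" "mu \<in> simplex_pos" for lam mu
    using fr_isometry_cos_angle_vsqrt[OF iso that] cos_angle_vsqrt_aligned_transport[OF beta that]
    by simp
  have "(\<Sum>k\<in>UNIV. (beta $ k)\<^sup>2 * lam $ k) = (norm (beta * vsqrt lam))\<^sup>2"
    using lam by (simp add: norm_mult_vsqrt_squared simplex_pos_def less_imp_le)
  also have "\<dots> = (norm (beta * vsqrt mu))\<^sup>2"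
    using norm_mult_vsqrt_eq_if_cos_angle_preserved[OF beta preserved lam mu] by simp
  also have "\<dots> = (\<Sum>k\<in>UNIV. (beta $ k)\<^sup>2 * mu $ k)"
    using mu by (simp add: norm_mult_vsqrt_squared simplex_pos_def less_imp_le)
  finally show ?thesis .
qed

lemma fr_isometry_aligned_transport_vec:
  fixes c :: real
  assumes "c \<noteq> 0"
  shows "fr_isometry (aligned_transport (vec c :: real ^ 'n))"
proof -
  have fixes_simplex: "lam \<in> simplex_pos \<Longrightarrow> aligned_transport (vec c) lam = (lam :: real ^ 'n)" for lam
    using assms
    by (simp add: aligned_transport_def simplex_pos_def vec_eq_iff sum_distrib_left[symmetric])
  have "bij_betw (aligned_transport (vec c)) simplex_pos (simplex_pos :: (real ^ 'n) set)"
    by (subst bij_betw_cong[where g = id]) (simp_all add: fixes_simplex)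
  with fixes_simplex show ?thesis
    by (simp add: fr_isometry_def)
qed

theorem mainTheorem6:
  fixes beta :: "real ^ 'n"
  assumes "\<forall>i. beta $ i > 0"
  shows "fr_isometry (aligned_transport beta) \<longleftrightarrow> (\<forall>i j. beta $ i = beta $ j)"
proof
  assume iso: "fr_isometry (aligned_transport beta)"
  have "(beta $ i)\<^sup>2 = (beta $ j)\<^sup>2" for i j
    by (rule weight_eq_if_weighted_sum_const_on_simplex_pos)
      (rule weighted_sum_const_if_fr_isometry_aligned_transport[OF assms iso])
  then show "\<forall>i j. beta $ i = beta $ j"
    using assms by (simp add: power2_eq_iff_nonneg less_imp_le)
next
  assume "\<forall>i j. beta $ i = beta $ j"
  then have "beta = vec (beta $ k)" "beta $ k \<noteq> 0" for k
    using assms by (auto simp: vec_eq_iff less_imp_neq[symmetric])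
  then show "fr_isometry (aligned_transport beta)"
    by (metis fr_isometry_aligned_transport_vec)
qed

end
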